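(* Let $n$ and $d$ be positive integers such that the largest prime $q_d$ smaller than $n/d$ exists and satisfies $q_d>n/(d+1)$, and let $\beta_d=n-dq_d$. Let $p^a$ ($p$ prime, $a\ge1$) be a prime power dividing $n$ with $p\ne q_d$. For each integer $\delta$ with $0\le\delta\le\beta_d$, let $N(\delta)$ be the number of integer solutions $(x,y)$ of $p^a x-q_d y=\delta$ with $x>0$ and $0\le y\le\lfloor d/2\rfloor$. Then $n$ satisfies the $N$-variation of Condition 1 with \[N=2+\sum_{\delta=0}^{\beta_d}N(\delta).\]
   Context: A positive integer $n$ satisfies the $N$-variation of Condition 1 if there exist $N$ different primes $p_1,\dots,p_N$ such that for every $1\le k\le n-1$, $\binom{n}{k}$ is divisible by at least one of $p_1,\dots,p_N$. *)

theory Defs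
  imports "HOL-Computational_Algebra.Primes" Complex_Main
begin

definition cond1_var :: "nat \<Rightarrow> nat \<Rightarrow> bool" where
  "cond1_var N n \<longleftrightarrow>
     (\<exists>P :: nat set. finite P \<and> card P = N \<and> (\<forall>p\<in>P. prime p) \<and>
        (\<forall>k. 1 \<le> k \<and> k \<le> n - 1 \<longrightarrow> (\<exists>p\<in>P. p dvd (n choose k))))"

definition Nsol :: "nat \<Rightarrow> nat \<Rightarrow> nat \<Rightarrow> nat \<Rightarrow> nat \<Rightarrow> nat" where
  "Nsol p a q d \<delta> = card {(x :: int, y :: int).
      int p ^ a * x - int q * y = int \<delta> \<and> x > 0 \<and> 0 \<le> y \<and> y \<le> int (d div 2)}"

end

theory Submission
  imports Defs
begin

(* Write n = d q + beta with beta < q. The prime p divides C(n, k) unless p^a divides k, because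
   k C(n, k) = n C(n - 1, k - 1); the prime q divides C(n, k) unless k mod q <= beta, because
   otherwise adding k and n - k in base q carries in the last digit. Up to the symmetry
   k <-> n - k, every remaining k satisfies k div q <= d div 2, and it determines the solution
   (x, y) = (k / p^a, k div q) of p^a x - q y = k mod q with 0 <= k mod q <= beta. One prime factor
   of C(n, k) for each such k, together with p and q, therefore covers every C(n, k). *)

lemma prime_dvd_choose_if_mod_less:
  fixes n k q :: nat
  assumes "prime q" and "n mod q < k mod q"
  shows "q dvd (n choose k)"
  using assms(2)
proof (induction n arbitrary: k)
  case 0
  then show ?case by (cases k) auto
next
  case (Suc m)
  then obtain j where k: "k = Suc j" by (cases k) auto
  show ?case
  proof (cases "q dvd Suc m")
    case True
    moreover have "(Suc m choose k) * k = Suc m * (m choose j)"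
      unfolding k by (rule Suc_times_binomial_eq[symmetric])
    ultimately have "q dvd (Suc m choose k) * k"
      by (metis dvd_mult2)
    moreover have "\<not> q dvd k"
      using Suc.prems True by (auto simp: dvd_eq_mod_eq_0)
    ultimately show ?thesis
      using assms(1) prime_dvd_mult_iff by blast
  next
    case False
    then have "Suc m mod q = Suc (m mod q)"
      by (auto simp: mod_Suc dvd_eq_mod_eq_0 split: if_splits)
    moreover have "k mod q = Suc (j mod q)"
      using Suc.prems by (auto simp: k mod_Suc split: if_splits)
    ultimately have "m mod q < j mod q" and "m mod q < Suc j mod q"
      using Suc.prems by (simp_all add: k)
    then show ?thesis
      using Suc.IH by (simp add: k)
  qed
qed

lemma prime_dvd_choose_if_not_power_dvd:
  fixes n k p :: nat
  assumes "prime p" and "p ^ a dvd n" and "\<not> p ^ a dvd k"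
  shows "p dvd (n choose k)"
proof (rule ccontr)
  assume "\<not> p dvd (n choose k)"
  then have "coprime (p ^ a) (n choose k)"
    using assms(1) by (simp add: prime_imp_coprime coprime_commute)
  moreover have "0 < k"
    using assms(3) by (rule contrapos_np) simp
  then have "p ^ a dvd k * (n choose k)"
    using assms(2) by (simp add: times_binomial_minus1_eq)
  ultimately show False
    using assms(3) coprime_dvd_mult_left_iff by blast
qed

lemma div_mod_diff_nat:
  fixes n k q :: nat
  assumes "k \<le> n" and "k mod q \<le> n mod q"
  shows "(n - k) div q = n div q - k div q" and "(n - k) mod q = n mod q - k mod q"
proof -
  have "(n - k) div q = n div q - k div q \<and> (n - k) mod q = n mod q - k mod q"
  proof (cases "q = 0")
    case False
    have "q * (k div q) \<le> q * (n div q)"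
      using assms(1) by (simp add: div_le_mono)
    moreover have "q * (n div q) + n mod q = n" and "q * (k div q) + k mod q = k"
      by simp_all
    ultimately have decomp: "n - k = q * (n div q - k div q) + (n mod q - k mod q)"
      using assms(2) by (simp add: diff_mult_distrib2)
    have "n mod q - k mod q < q"
      using False mod_less_divisor[of q n] by linarith
    then show ?thesis
      unfolding decomp by simp
  qed simp
  then show "(n - k) div q = n div q - k div q" and "(n - k) mod q = n mod q - k mod q"
    by simp_all
qed

lemma cond1_var_if_prime_cover:
  assumes "finite P" and "\<forall>r\<in>P. prime r" and "card P \<le> N"
    and "\<forall>k. 1 \<le> k \<and> k \<le> n - 1 \<longrightarrow> (\<exists>r\<in>P. r dvd (n choose k))"
  shows "cond1_var N n"
proof -
  have "infinite ({r :: nat. prime r} - P)"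
    using primes_infinite assms(1) by auto
  then obtain Q where Q: "finite Q" "card Q = N - card P" "Q \<subseteq> {r. prime r} - P"
    using infinite_arbitrarily_large by blast
  then have "card (P \<union> Q) = N"
    using assms(1,3) by (subst card_Un_disjoint) auto
  then show ?thesis
    unfolding cond1_var_def using assms Q by (intro exI[of _ "P \<union> Q"]) auto
qed

definition Nsol_solutions :: "nat \<Rightarrow> nat \<Rightarrow> nat \<Rightarrow> nat \<Rightarrow> nat \<Rightarrow> (int \<times> int) set" where
  "Nsol_solutions p a q d \<delta> = {(x, y).
      int p ^ a * x - int q * y = int \<delta> \<and> x > 0 \<and> 0 \<le> y \<and> y \<le> int (d div 2)}"

lemma Nsol_eq_card: "Nsol p a q d \<delta> = card (Nsol_solutions p a q d \<delta>)"
  by (simp add: Nsol_def Nsol_solutions_def)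

lemma finite_Nsol_solutions:
  assumes "0 < p"
  shows "finite (Nsol_solutions p a q d \<delta>)"
proof (rule finite_subset)
  show "Nsol_solutions p a q d \<delta> \<subseteq>
      (\<lambda>y. ((int q * y + int \<delta>) div int p ^ a, y)) ` {0..int (d div 2)}"
  proof (clarsimp simp: Nsol_solutions_def image_iff)
    fix x y :: int
    assume "int p ^ a * x - int q * y = int \<delta>"
    then have "int q * y + int \<delta> = int p ^ a * x"
      by simp
    then show "x = (int q * y + int \<delta>) div int p ^ a"
      using assms by simp
  qed
qed simp

(* The indices k left over by p and q, normalised by k <-> n - k to the lower half of the
   quotients k div q. *)
definition residual_indices :: "nat \<Rightarrow> nat \<Rightarrow> nat \<Rightarrow> nat \<Rightarrow> nat set" where
  "residual_indices n p a q =
     {k. 0 < k \<and> k < n \<and> p ^ a dvd k \<and> k mod q \<le> n mod q \<and> k div q \<le> n div q div 2}"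

lemma card_residual_indices_le:
  assumes "0 < p"
  shows "card (residual_indices n p a q) \<le> (\<Sum>\<delta> = 0..n mod q. Nsol p a q (n div q) \<delta>)"
proof -
  let ?R = "residual_indices n p a q"
  let ?S = "Nsol_solutions p a q (n div q)"
  let ?g = "\<lambda>k. (k mod q, int (k div p ^ a), int (k div q))"
  have "inj_on ?g ?R"
    by (rule inj_onI) (metis div_mult_mod_eq prod.inject of_nat_eq_iff)
  moreover have "?g ` ?R \<subseteq> (SIGMA \<delta>:{0..n mod q}. ?S \<delta>)"
  proof (rule image_subsetI)
    fix k assume "k \<in> ?R"
    then have k: "0 < k" "p ^ a dvd k" "k mod q \<le> n mod q" "k div q \<le> n div q div 2"
      by (simp_all add: residual_indices_def)
    have "p ^ a * (k div p ^ a) = q * (k div q) + k mod q"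
      using k(2) by simp
    then have "int p ^ a * int (k div p ^ a) - int q * int (k div q) = int (k mod q)"
      by (metis add_diff_cancel_left' of_nat_add of_nat_mult of_nat_power)
    moreover have "0 < k div p ^ a"
      using k(1,2) by (metis dvd_div_eq_0_iff not_gr0)
    ultimately show "?g k \<in> (SIGMA \<delta>:{0..n mod q}. ?S \<delta>)"
      using k(3,4) by (simp add: Nsol_solutions_def)
  qed
  moreover have "finite (SIGMA \<delta>:{0..n mod q}. ?S \<delta>)"
    using assms finite_Nsol_solutions by blast
  ultimately have "card ?R \<le> card (SIGMA \<delta>:{0..n mod q}. ?S \<delta>)"
    by (rule card_inj_on_le)
  also have "\<dots> = (\<Sum>\<delta> = 0..n mod q. Nsol p a q (n div q) \<delta>)"
    using assms finite_Nsol_solutions by (simp add: Nsol_eq_card)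
  finally show ?thesis .
qed

lemma choose_dvd_or_residual:
  assumes "prime p" and "prime q" and "p ^ a dvd n" and "0 < k" and "k < n"
  shows "p dvd (n choose k) \<or> q dvd (n choose k) \<or>
    k \<in> residual_indices n p a q \<or> n - k \<in> residual_indices n p a q"
proof -
  consider "\<not> p ^ a dvd k" | "n mod q < k mod q"
    | "p ^ a dvd k" "k mod q \<le> n mod q" "k div q \<le> n div q div 2"
    | "p ^ a dvd k" "k mod q \<le> n mod q" "n div q div 2 < k div q"
    by linarith
  then show ?thesis
  proof cases
    case 1
    then show ?thesis
      using prime_dvd_choose_if_not_power_dvd assms(1,3) by blast
  next
    case 2
    then show ?thesis
      using prime_dvd_choose_if_mod_less assms(2) by blast
  next
    case 3
    then show ?thesis
      using assms(4,5) by (simp add: residual_indices_def)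
  next
    case 4
    have "(n - k) div q = n div q - k div q" and "(n - k) mod q = n mod q - k mod q"
      using div_mod_diff_nat assms(5) 4(2) by simp_all
    moreover have "p ^ a dvd n - k"
      using assms(3) 4(1) by (rule dvd_diff_nat)
    moreover have "n div q - k div q \<le> n div q div 2"
      using 4(3) div_mult_mod_eq[of "n div q" 2] by linarith
    ultimately show ?thesis
      using assms(4,5) by (simp add: residual_indices_def)
  qed
qed

lemma cond1_var_if_card_residual_le:
  assumes "prime p" and "prime q" and "p ^ a dvd n"
    and "card (residual_indices n p a q) \<le> M"
  shows "cond1_var (2 + M) n"
proof -
  let ?R = "residual_indices n p a q"
  have "\<exists>r. prime r \<and> r dvd (n choose k)" if "k \<in> ?R" for k
  proof (rule prime_factor_nat)
    have "0 < k" "k < n"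
      using that by (simp_all add: residual_indices_def)
    then show "n choose k \<noteq> 1"
      using upper_le_binomial[of k n] by linarith
  qed
  then obtain f where f: "\<And>k. k \<in> ?R \<Longrightarrow> prime (f k) \<and> f k dvd (n choose k)"
    by metis
  define P where "P = {p, q} \<union> f ` ?R"
  have "finite ?R"
    by (rule finite_subset[of _ "{..<n}"]) (auto simp: residual_indices_def)
  then have "finite P" and "card P \<le> 2 + M"
    unfolding P_def using assms(4) card_Un_le[of "{p, q}"] card_image_le[of ?R f]
    by (auto simp: card_insert_if)
  moreover have "\<forall>r\<in>P. prime r"
    unfolding P_def using assms(1,2) f by auto
  moreover have "\<exists>r\<in>P. r dvd (n choose k)" if "1 \<le> k" "k \<le> n - 1" for k
  proof -
    from that have "0 < k" "k < n"
      by auto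
    then consider "p dvd (n choose k)" | "q dvd (n choose k)" | "k \<in> ?R" | "n - k \<in> ?R"
      using choose_dvd_or_residual[OF assms(1-3)] by blast
    then show ?thesis
    proof cases
      case 4
      moreover have "n choose (n - k) = n choose k"
        using \<open>k < n\<close> by (simp flip: binomial_symmetric)
      ultimately show ?thesis
        using f[of "n - k"] unfolding P_def by auto
    qed (use f in \<open>auto simp: P_def\<close>)
  qed
  ultimately show ?thesis
    by (intro cond1_var_if_prime_cover) auto
qed

theorem mainTheorem15:
  fixes n d q p a :: nat
  assumes "n > 0" and "d > 0"
    and "prime q" and "real q < real n / real d"
    and "\<forall>r::nat. prime r \<and> real r < real n / real d \<longrightarrow> r \<le> q"
    and "real q > real n / real (d + 1)"
    and "prime p" and "a \<ge> 1" and "p ^ a dvd n" and "p \<noteq> q"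
  shows "cond1_var (2 + (\<Sum>\<delta> = 0..n - d * q. Nsol p a q d \<delta>)) n"
proof -
  have "real q * real d < real n" and "real n < real q * real (Suc d)"
    using assms(2,4,6) by (simp_all add: field_simps)
  then have "q * d < n" and "n < q * Suc d"
    by (metis of_nat_less_iff of_nat_mult)+
  then have "n div q = d"
    by (intro div_nat_eqI) simp_all
  moreover have "n mod q = n - d * q"
    using \<open>n div q = d\<close> minus_div_mult_eq_mod[of n q] by simp
  ultimately have "card (residual_indices n p a q) \<le> (\<Sum>\<delta> = 0..n - d * q. Nsol p a q d \<delta>)"
    using card_residual_indices_le[of p n a q] prime_gt_0_nat[OF assms(7)] by simp
  then show ?thesis
    using cond1_var_if_card_residual_le assms(3,7,9) by blast
qed

end
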